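(* Let $\mathbb{Q}$ be a set of qualifiers, $\Gamma$ an environment, $t$ an E-term, $T$ a type, and $C\triangleright T'$ a contextual type. If $\Gamma\vdash_{\mathbb{Q}} t\downarrow T\uparrow C\triangleright T'$ (round-trip strengthening judgment), then $\Gamma;C\vdash T'<:T$.
   Context: Syntax. Refinement terms $\psi$ are terms of a fixed decidable logic; formulas are Boolean-sorted. E-terms $e ::= x \mid e\,e \mid e\,f$; function terms $f ::= \lambda x.t \mid \mathtt{fix}\ x.t$; program terms also include conditionals and pattern matches. Base types $B ::= \mathtt{Bool}\mid\mathtt{Int}\mid D\,T_1\ldots T_n\mid\alpha$. Types $T ::= \{B\mid\psi\}$ (scalar; $\psi$ may mention the value variable $\nu$) $\mid x{:}T\to T$ (the result may mention $x$ only if the argument type is scalar; write $T_x\to T$ when it does not). Schemas $\forall\alpha_1\ldots\alpha_n.T$. Contexts $C ::= \cdot\mid x{:}T;C$; a contextual type $C\triangleright T$ (a plain type has empty context). Special non-scalar types $\mathsf{top},\mathsf{bot}$ are a supertype and subtype of every type. An environment $\Gamma$ is a sequence of bindings and path conditions; $\Gamma(x)$ is the type/schema bound to $x$; $\pi(\Gamma)$ the conjunction of path conditions. Assumptions: $[\![\Gamma]\!]_\psi=\pi(\Gamma)\wedge\mathrm{bnd}(FV(\pi(\Gamma))\cup FV(\psi),\Gamma)$, where $\mathrm{bnd}(v,\Gamma;x{:}\{B\mid\psi\})=[x/\nu]\psi\wedge\mathrm{bnd}(v\setminus\{x\}\cup FV(\psi),\Gamma)$ if $x\in v$ else $\mathrm{bnd}(v,\Gamma)$;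 $\mathrm{bnd}(v,\Gamma;x{:}T)=\mathrm{bnd}(v,\Gamma)$ for non-scalar $T$; $\mathrm{bnd}(v,\cdot)=\top$. Subtyping: $\Gamma\vdash\{B\mid\psi\}<:\{B'\mid\psi'\}$ iff $\Gamma\vdash B<:B'$ and $[\![\Gamma]\!]_{\psi\Rightarrow\psi'}\wedge\psi\Rightarrow\psi'$ is valid; $x{:}T_x\to T<:y{:}T_y\to T'$ iff $\Gamma\vdash T_y<:T_x$ and $\Gamma;y{:}T_y\vdash[y/x]T<:T'$; $D\,T_i<:D\,T'_i$ iff $T_i<:T'_i$ for all $i$; $B<:B$; $\mathsf{bot}<:T<:\mathsf{top}$. Liquid types: for a set $\mathbb{Q}$ of qualifiers (formulas with placeholders $\star$), a formula is liquid if it is a conjunction of well-formed formulas each obtained from a qualifier by substituting variables for placeholders; $\Gamma\vdash_{\mathbb{Q}}T$ means all refinements of $T$ are liquid in their scopes. Round-trip strengthening $\Gamma\vdash_{\mathbb{Q}} e\downarrow T\uparrow\hat T$ is derived by: (VarSc) if $\Gamma(x)=\{B\mid\psi\}$ and $\Gamma\vdash\{B\mid\psi\}<:T$ then $x\downarrow T\uparrow\{B\mid\nu=x\}$. (Var$\forall$) if $\Gamma(x)=\forall\alpha_i.T'$ (possibly no variables), $\Gamma\vdash_{\mathbb{Q}}T_i$ and $\Gamma\vdash[T_i/\alpha_i]T'<:T$ then $x\downarrow T\uparrow[T_i/\alpha_i]T'$. (AppFO) if $\Gamma\vdash_{\mathbb{Q}} e_1\downarrow(\{B\mid\bot\}\to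 T)\uparrow C_1\triangleright(x{:}\{B\mid\psi\}\to T')$, $\Gamma;C_1\vdash_{\mathbb{Q}} e_2\downarrow\{B\mid\psi\}\uparrow C_2\triangleright T_x$ and $\Gamma;C_1;C_2;x{:}T_x\vdash T'<:T$ then $e_1e_2\downarrow T\uparrow(C_1;C_2;x{:}T_x)\triangleright T'$. (AppHO) if $\Gamma\vdash_{\mathbb{Q}} e\downarrow(\mathsf{bot}\to T)\uparrow C\triangleright(T'_x\to T')$ and $\Gamma;C\vdash_{\mathbb{Q}} f\downarrow T'_x$ (round-trip checking judgment for the function term $f$) then $e\,f\downarrow T\uparrow C\triangleright T'$. *)

theory Defs
  imports Main
begin

datatype fvar = Nu | V string

text \<open>Formulas/terms of the refinement logic, parametric in the variable type so that
  qualifiers (formulas with placeholders) can reuse the same syntax.\<close>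
datatype 'v fml =
    FVar 'v
  | FBool bool
  | FInt int
  | FNot "'v fml"
  | FAnd "'v fml" "'v fml"
  | FOr "'v fml" "'v fml"
  | FImp "'v fml" "'v fml"
  | FEq "'v fml" "'v fml"
  | FLe "'v fml" "'v fml"
  | FAdd "'v fml" "'v fml"
  | FSub "'v fml" "'v fml"
  | FApp string "'v fml list"   \<comment> \<open>uninterpreted function / measure application\<close>

type_synonym formula = "fvar fml"

datatype val = VInt int | VBool bool | VAtom nat

definition truth :: "val \<Rightarrow> bool" where "truth v \<longleftrightarrow> v = VBool True"

fun as_int :: "val \<Rightarrow> int" where
  "as_int (VInt i) = i"
| "as_int _ = 0"

type_synonym interp = "string \<Rightarrow> val list \<Rightarrow> val"

primrec feval :: "interp \<Rightarrow> ('v \<Rightarrow> val) \<Rightarrow> 'v fml \<Rightarrow> val" where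
  "feval I \<sigma> (FVar x) = \<sigma> x"
| "feval I \<sigma> (FBool b) = VBool b"
| "feval I \<sigma> (FInt i) = VInt i"
| "feval I \<sigma> (FNot a) = VBool (\<not> truth (feval I \<sigma> a))"
| "feval I \<sigma> (FAnd a b) = VBool (truth (feval I \<sigma> a) \<and> truth (feval I \<sigma> b))"
| "feval I \<sigma> (FOr a b) = VBool (truth (feval I \<sigma> a) \<or> truth (feval I \<sigma> b))"
| "feval I \<sigma> (FImp a b) = VBool (truth (feval I \<sigma> a) \<longrightarrow> truth (feval I \<sigma> b))"
| "feval I \<sigma> (FEq a b) = VBool (feval I \<sigma> a = feval I \<sigma> b)"
| "feval I \<sigma> (FLe a b) = (case (feval I \<sigma> a, feval I \<sigma> b) of
      (VInt i, VInt j) \<Rightarrow> VBool (i \<le> j) | _ \<Rightarrow> VBool False)"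
| "feval I \<sigma> (FAdd a b) = VInt (as_int (feval I \<sigma> a) + as_int (feval I \<sigma> b))"
| "feval I \<sigma> (FSub a b) = VInt (as_int (feval I \<sigma> a) - as_int (feval I \<sigma> b))"
| "feval I \<sigma> (FApp f as) = I f (map (feval I \<sigma>) as)"

definition valid :: "formula \<Rightarrow> bool" where
  "valid \<phi> \<longleftrightarrow> (\<forall>I \<sigma>. truth (feval I \<sigma> \<phi>))"

abbreviation fv :: "'v fml \<Rightarrow> 'v set" where "fv \<equiv> set_fml"

definition subst_nu :: "string \<Rightarrow> formula \<Rightarrow> formula" where
  "subst_nu x \<psi> = map_fml (\<lambda>v. if v = Nu then V x else v) \<psi>"

definition rename_f :: "string \<Rightarrow> string \<Rightarrow> formula \<Rightarrow> formula" where
  "rename_f y x \<psi> = map_fml (\<lambda>v. if v = V x then V y else v) \<psi>"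

fun fconj :: "formula list \<Rightarrow> formula" where
  "fconj [] = FBool True"
| "fconj [a] = a"
| "fconj (a # as) = FAnd a (fconj as)"

datatype base =
    BBool | BInt
  | BData string "ty list"
  | BTVar string
and ty =
    Scalar base formula
  | Arr string ty ty
  | Top
  | Bot

type_synonym schema = "string list \<times> ty"

primrec is_scalar :: "ty \<Rightarrow> bool" where
  "is_scalar (Scalar B \<psi>) = True"
| "is_scalar (Arr x T1 T2) = False"
| "is_scalar Top = False"
| "is_scalar Bot = False"

text \<open>Free program variables of a type (Nu is bound by each scalar type).\<close>
primrec fv_ty :: "ty \<Rightarrow> string set" and fv_base :: "base \<Rightarrow> string set" where
  "fv_ty (Scalar B \<psi>) = fv_base B \<union> {x. V x \<in> fv \<psi>}"
| "fv_ty (Arr x T1 T2) = fv_ty T1 \<union> (fv_ty T2 - {x})"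
| "fv_ty Top = {}"
| "fv_ty Bot = {}"
| "fv_base BBool = {}"
| "fv_base BInt = {}"
| "fv_base (BData d Ts) = \<Union> (set (map fv_ty Ts))"
| "fv_base (BTVar a) = {}"

primrec rename_ty :: "string \<Rightarrow> string \<Rightarrow> ty \<Rightarrow> ty"
  and rename_base :: "string \<Rightarrow> string \<Rightarrow> base \<Rightarrow> base" where
  "rename_ty y x (Scalar B \<psi>) = Scalar (rename_base y x B) (rename_f y x \<psi>)"
| "rename_ty y x (Arr z T1 T2) =
     Arr z (rename_ty y x T1) (if z = x then T2 else rename_ty y x T2)"
| "rename_ty y x Top = Top"
| "rename_ty y x Bot = Bot"
| "rename_base y x BBool = BBool"
| "rename_base y x BInt = BInt"
| "rename_base y x (BData d Ts) = BData d (map (rename_ty y x) Ts)"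
| "rename_base y x (BTVar a) = BTVar a"

primrec tsubst :: "(string \<Rightarrow> ty option) \<Rightarrow> ty \<Rightarrow> ty"
  and bsubst :: "(string \<Rightarrow> ty option) \<Rightarrow> base \<Rightarrow> base" where
  "tsubst s (Scalar B \<psi>) =
     (case B of
        BTVar a \<Rightarrow> (case s a of
                      None \<Rightarrow> Scalar B \<psi>
                    | Some (Scalar B' \<psi>') \<Rightarrow> Scalar B' (FAnd \<psi>' \<psi>)
                    | Some T \<Rightarrow> T)
      | _ \<Rightarrow> Scalar (bsubst s B) \<psi>)"
| "tsubst s (Arr x T1 T2) = Arr x (tsubst s T1) (tsubst s T2)"
| "tsubst s Top = Top"
| "tsubst s Bot = Bot"
| "bsubst s BBool = BBool"
| "bsubst s BInt = BInt"
| "bsubst s (BData d Ts) = BData d (map (tsubst s) Ts)"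
| "bsubst s (BTVar a) = BTVar a"

definition inst_schema :: "string list \<Rightarrow> ty list \<Rightarrow> ty \<Rightarrow> ty" where
  "inst_schema as Ts T = tsubst (map_of (zip as Ts)) T"

text \<open>An environment is a sequence of bindings and path conditions; the most recent
  entry is the last element of the list.\<close>
datatype entry = EBind string schema | EPath formula

type_synonym env = "entry list"
type_synonym ctx = "(string \<times> ty) list"

definition ctx_env :: "ctx \<Rightarrow> env" where
  "ctx_env C = map (\<lambda>(x, T). EBind x ([], T)) C"

definition env_ext :: "env \<Rightarrow> ctx \<Rightarrow> env" where
  "env_ext \<Gamma> C = \<Gamma> @ ctx_env C"

fun lookup_rev :: "entry list \<Rightarrow> string \<Rightarrow> schema option" where
  "lookup_rev [] x = None"
| "lookup_rev (EBind y S # \<Gamma>) x = (if x = y then Some S else lookup_rev \<Gamma> x)"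
| "lookup_rev (EPath \<phi> # \<Gamma>) x = lookup_rev \<Gamma> x"

definition lookup :: "env \<Rightarrow> string \<Rightarrow> schema option" where
  "lookup \<Gamma> x = lookup_rev (rev \<Gamma>) x"

fun path_rev :: "entry list \<Rightarrow> formula list" where
  "path_rev [] = []"
| "path_rev (EBind y S # \<Gamma>) = path_rev \<Gamma>"
| "path_rev (EPath \<phi> # \<Gamma>) = \<phi> # path_rev \<Gamma>"

definition pi_env :: "env \<Rightarrow> formula" where
  "pi_env \<Gamma> = fconj (rev (path_rev (rev \<Gamma>)))"

fun bnd_rev :: "fvar set \<Rightarrow> entry list \<Rightarrow> formula" where
  "bnd_rev v [] = FBool True"
| "bnd_rev v (EPath \<phi> # \<Gamma>) = bnd_rev v \<Gamma>"
| "bnd_rev v (EBind x (as, T) # \<Gamma>) =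
     (case T of
        Scalar B \<psi> \<Rightarrow>
          (if as = [] \<and> V x \<in> v
           then FAnd (subst_nu x \<psi>) (bnd_rev (v - {V x} \<union> fv \<psi>) \<Gamma>)
           else bnd_rev v \<Gamma>)
      | _ \<Rightarrow> bnd_rev v \<Gamma>)"

definition bnd :: "fvar set \<Rightarrow> env \<Rightarrow> formula" where
  "bnd v \<Gamma> = bnd_rev v (rev \<Gamma>)"

definition assumptions :: "env \<Rightarrow> formula \<Rightarrow> formula" where
  "assumptions \<Gamma> \<psi> = FAnd (pi_env \<Gamma>) (bnd (fv (pi_env \<Gamma>) \<union> fv \<psi>) \<Gamma>)"

inductive subtype :: "env \<Rightarrow> ty \<Rightarrow> ty \<Rightarrow> bool"
  and subbase :: "env \<Rightarrow> base \<Rightarrow> base \<Rightarrow> bool" where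
  sub_scalar: "subbase \<Gamma> B B' \<Longrightarrow>
     valid (FImp (FAnd (assumptions \<Gamma> (FImp \<psi> \<psi>')) \<psi>) \<psi>') \<Longrightarrow>
     subtype \<Gamma> (Scalar B \<psi>) (Scalar B' \<psi>')"
| sub_arr: "subtype \<Gamma> Ty Tx \<Longrightarrow>
     subtype (env_ext \<Gamma> [(y, Ty)]) (rename_ty y x T) T' \<Longrightarrow>
     subtype \<Gamma> (Arr x Tx T) (Arr y Ty T')"
| sub_bot: "subtype \<Gamma> Bot T"
| sub_top: "subtype \<Gamma> T Top"
| subb_data: "list_all2 (subtype \<Gamma>) Ts Ts' \<Longrightarrow> subbase \<Gamma> (BData d Ts) (BData d Ts')"
| subb_refl: "subbase \<Gamma> B B"

datatype qvar = QVar fvar | Star nat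

type_synonym qualifier = "qvar fml"

definition qinst :: "(nat \<Rightarrow> fvar) \<Rightarrow> qualifier \<Rightarrow> formula" where
  "qinst s q = map_fml (\<lambda>w. case w of QVar v \<Rightarrow> v | Star n \<Rightarrow> s n) q"

definition liquid_fml :: "qualifier set \<Rightarrow> fvar set \<Rightarrow> formula \<Rightarrow> bool" where
  "liquid_fml Q S \<psi> \<longleftrightarrow>
     (\<exists>qs. (\<forall>\<phi>\<in>set qs. fv \<phi> \<subseteq> S \<and> (\<exists>q\<in>Q. \<exists>s. \<phi> = qinst s q)) \<and> \<psi> = fconj qs)"

primrec liquid_ty :: "qualifier set \<Rightarrow> fvar set \<Rightarrow> ty \<Rightarrow> bool"
  and liquid_base :: "qualifier set \<Rightarrow> fvar set \<Rightarrow> base \<Rightarrow> bool" where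
  "liquid_ty Q S (Scalar B \<psi>) = (liquid_base Q S B \<and> liquid_fml Q (insert Nu S) \<psi>)"
| "liquid_ty Q S (Arr x T1 T2) =
     (liquid_ty Q S T1 \<and> liquid_ty Q (if is_scalar T1 then insert (V x) S else S) T2)"
| "liquid_ty Q S Top = True"
| "liquid_ty Q S Bot = True"
| "liquid_base Q S BBool = True"
| "liquid_base Q S BInt = True"
| "liquid_base Q S (BData d Ts) = list_all (liquid_ty Q S) Ts"
| "liquid_base Q S (BTVar a) = True"

definition scalar_vars :: "env \<Rightarrow> fvar set" where
  "scalar_vars \<Gamma> = {V x | x B \<psi>. lookup \<Gamma> x = Some ([], Scalar B \<psi>)}"

definition liquid_in :: "qualifier set \<Rightarrow> env \<Rightarrow> ty \<Rightarrow> bool" where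
  "liquid_in Q \<Gamma> T \<longleftrightarrow> liquid_ty Q (scalar_vars \<Gamma>) T"

datatype tm =
    Var string
  | App tm tm
  | Lam string tm
  | Fix string tm
  | Ite tm tm tm
  | Match tm "(string \<times> string list \<times> tm) list"

primrec is_fterm :: "tm \<Rightarrow> bool" where
  "is_fterm (Var x) = False"
| "is_fterm (App a b) = False"
| "is_fterm (Lam x t) = True"
| "is_fterm (Fix x t) = True"
| "is_fterm (Ite a b c) = False"
| "is_fterm (Match t cs) = False"

inductive is_eterm :: "tm \<Rightarrow> bool" where
  "is_eterm (Var x)"
| "is_eterm e1 \<Longrightarrow> is_eterm e2 \<Longrightarrow> is_eterm (App e1 e2)"
| "is_eterm e \<Longrightarrow> is_fterm f \<Longrightarrow> is_eterm (App e f)"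

text \<open>The round-trip checking judgment for function terms is not specified in the
  context; it is a parameter chk (chk Gamma f T means Gamma |-_Q f \<down> T).\<close>
inductive rtrip :: "(env \<Rightarrow> tm \<Rightarrow> ty \<Rightarrow> bool) \<Rightarrow> qualifier set \<Rightarrow> env \<Rightarrow> tm \<Rightarrow> ty
                     \<Rightarrow> ctx \<Rightarrow> ty \<Rightarrow> bool"
  for chk :: "env \<Rightarrow> tm \<Rightarrow> ty \<Rightarrow> bool" and Q :: "qualifier set" where
  VarSc: "lookup \<Gamma> x = Some ([], Scalar B \<psi>) \<Longrightarrow>
     subtype \<Gamma> (Scalar B \<psi>) T \<Longrightarrow>
     rtrip chk Q \<Gamma> (Var x) T [] (Scalar B (FEq (FVar Nu) (FVar (V x))))"
| VarAll: "lookup \<Gamma> x = Some (as, T') \<Longrightarrow> length Ts = length as \<Longrightarrow>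
     (\<forall>Ti\<in>set Ts. liquid_in Q \<Gamma> Ti) \<Longrightarrow>
     subtype \<Gamma> (inst_schema as Ts T') T \<Longrightarrow>
     rtrip chk Q \<Gamma> (Var x) T [] (inst_schema as Ts T')"
| AppFO: "y \<notin> fv_ty T \<Longrightarrow>
     rtrip chk Q \<Gamma> e1 (Arr y (Scalar B (FBool False)) T) C1 (Arr x (Scalar B \<psi>) T') \<Longrightarrow>
     rtrip chk Q (env_ext \<Gamma> C1) e2 (Scalar B \<psi>) C2 Tx \<Longrightarrow>
     subtype (env_ext \<Gamma> (C1 @ C2 @ [(x, Tx)])) T' T \<Longrightarrow>
     rtrip chk Q \<Gamma> (App e1 e2) T (C1 @ C2 @ [(x, Tx)]) T'"
| AppHO: "y \<notin> fv_ty T \<Longrightarrow> x \<notin> fv_ty T' \<Longrightarrow> is_fterm f \<Longrightarrow>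
     rtrip chk Q \<Gamma> e (Arr y Bot T) C (Arr x Tx T') \<Longrightarrow>
     chk (env_ext \<Gamma> C) f Tx \<Longrightarrow>
     rtrip chk Q \<Gamma> (App e f) T C T'"

primrec entry_fv :: "entry \<Rightarrow> string set" where
  "entry_fv (EBind x S) = fv_ty (snd S)"
| "entry_fv (EPath \<phi>) = {x. V x \<in> fv \<phi>}"

fun bound_names :: "env \<Rightarrow> string list" where
  "bound_names [] = []"
| "bound_names (EBind x S # \<Gamma>) = x # bound_names \<Gamma>"
| "bound_names (EPath \<phi> # \<Gamma>) = bound_names \<Gamma>"

definition wf_env :: "env \<Rightarrow> bool" where
  "wf_env \<Gamma> \<longleftrightarrow> distinct (bound_names \<Gamma>) \<and>
     (\<forall>i < length \<Gamma>. entry_fv (\<Gamma> ! i) \<subseteq> set (bound_names (take i \<Gamma>)))"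

end

theory Submission
  imports Defs
begin

text \<open>The rules VarAll and AppFO conclude with exactly the
  required subtyping as a premise. For VarSc, the singleton type of x is below the declared
  type of x, because the assumptions about x pull in its refinement, and with the value
  variable equal to x that refinement is the refinement of the declared type. For AppHO,
  inverting the arrow subtyping against the shape bot \<rightarrow> T leaves a binding y:bot in the
  context; being non-scalar it contributes nothing to the assumptions and can be dropped, and
  the renaming of the result type is void because x is fresh in it.\<close>

lemma truth_VBool [simp]: "truth (VBool b) \<longleftrightarrow> b"
  by (simp add: truth_def)

lemma feval_map_fml: "feval I \<sigma> (map_fml f \<phi>) = feval I (\<sigma> \<circ> f) \<phi>"
  by (induct \<phi>) (auto cong: map_cong)

lemma truth_feval_subst_nu:
  "truth (feval I \<sigma> (subst_nu x \<psi>)) \<longleftrightarrow> truth (feval I (\<sigma>(Nu := \<sigma> (V x))) \<psi>)"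
proof -
  have "\<sigma> \<circ> (\<lambda>v. if v = Nu then V x else v) = \<sigma>(Nu := \<sigma> (V x))"
    by auto
  then show ?thesis
    by (simp add: subst_nu_def feval_map_fml)
qed

lemma bound_names_append: "bound_names (xs @ ys) = bound_names xs @ bound_names ys"
  by (induct xs rule: bound_names.induct) auto

lemma set_bound_names_rev: "set (bound_names (rev xs)) = set (bound_names xs)"
  by (induct xs rule: bound_names.induct) (auto simp: bound_names_append)

lemma truth_bnd_rev_Un:
  "truth (feval I \<sigma> (bnd_rev (v \<union> w) R)) \<longleftrightarrow>
   truth (feval I \<sigma> (bnd_rev v R)) \<and> truth (feval I \<sigma> (bnd_rev w R))"
proof (induct R arbitrary: v w)
  case Nil
  then show ?case by simp
next
  case (Cons e R)
  show ?case
  proof (cases e)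
    case (EPath \<phi>)
    then show ?thesis using Cons by simp
  next
    case (EBind x S)
    obtain as T where S: "S = (as, T)" by (cases S)
    show ?thesis
    proof (cases T)
      case (Scalar B \<psi>)
      have "(v \<union> w) - {V x} \<union> fv \<psi> = (v - {V x} \<union> fv \<psi>) \<union> (w - {V x} \<union> fv \<psi>)"
        and "V x \<notin> w \<Longrightarrow> (v \<union> w) - {V x} \<union> fv \<psi> = (v - {V x} \<union> fv \<psi>) \<union> w"
        and "V x \<notin> v \<Longrightarrow> (v \<union> w) - {V x} \<union> fv \<psi> = v \<union> (w - {V x} \<union> fv \<psi>)"
        by auto
      then show ?thesis using Cons unfolding EBind S Scalar
        by (cases "as = []") auto
    qed (use Cons EBind S in simp_all)
  qed
qed

lemma bnd_rev_append_fresh: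
  assumes "\<forall>z\<in>set (bound_names R1). V z \<notin> v"
  shows "bnd_rev v (R1 @ R2) = bnd_rev v R2"
  using assms
proof (induct R1 arbitrary: v)
  case (Cons e R)
  show ?case
  proof (cases e)
    case (EBind x S)
    obtain as T where S: "S = (as, T)" by (cases S)
    show ?thesis using Cons unfolding EBind S by (cases T) auto
  qed (use Cons in simp)
qed simp

lemma lookup_SomeD:
  assumes "lookup \<Gamma> x = Some S"
  obtains \<Gamma>1 \<Gamma>2 where "\<Gamma> = \<Gamma>1 @ EBind x S # \<Gamma>2" and "x \<notin> set (bound_names \<Gamma>2)"
proof -
  have "lookup_rev R x = Some S \<Longrightarrow> \<exists>R1 R2. R = R1 @ EBind x S # R2 \<and> x \<notin> set (bound_names R1)"
    for R
  proof (induct R x rule: lookup_rev.induct)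
    case (2 y S' R x)
    show ?case
    proof (cases "x = y")
      case True
      then show ?thesis using 2 by (intro exI[of _ "[]"] exI[of _ R]) auto
    next
      case False
      then obtain R1 R2 where "R = R1 @ EBind x S # R2" "x \<notin> set (bound_names R1)"
        using 2 by auto
      then show ?thesis using False by (intro exI[of _ "EBind y S' # R1"] exI[of _ R2]) auto
    qed
  next
    case (3 \<phi> R x)
    then obtain R1 R2 where "R = R1 @ EBind x S # R2" "x \<notin> set (bound_names R1)"
      by auto
    then show ?case by (intro exI[of _ "EPath \<phi> # R1"] exI[of _ R2]) auto
  qed simp
  then obtain R1 R2 where R: "rev \<Gamma> = R1 @ EBind x S # R2" "x \<notin> set (bound_names R1)"
    using assms unfolding lookup_def by blast
  have "\<Gamma> = rev R2 @ EBind x S # rev R1"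
    using arg_cong[OF R(1), of rev] by simp
  then show thesis
    by (rule that) (use R(2) in \<open>simp add: set_bound_names_rev\<close>)
qed

lemma wf_env_entry_fv:
  assumes "wf_env (\<Gamma>1 @ e # \<Gamma>2)"
  shows "entry_fv e \<subseteq> set (bound_names \<Gamma>1)"
  using assms unfolding wf_env_def
  by (auto dest!: spec[of _ "length \<Gamma>1"] simp: nth_append)

lemma bnd_lookup_scalar:
  assumes wf: "wf_env \<Gamma>" and lk: "lookup \<Gamma> x = Some ([], Scalar B \<psi>)"
  shows "bnd {V x} \<Gamma> = FAnd (subst_nu x \<psi>) (bnd (fv \<psi>) \<Gamma>)"
proof -
  obtain \<Gamma>1 \<Gamma>2 where \<Gamma>: "\<Gamma> = \<Gamma>1 @ EBind x ([], Scalar B \<psi>) # \<Gamma>2"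
    and x\<Gamma>2: "x \<notin> set (bound_names \<Gamma>2)"
    using lk by (rule lookup_SomeD)
  have fv\<psi>: "{z. V z \<in> fv \<psi>} \<subseteq> set (bound_names \<Gamma>1)"
    using wf_env_entry_fv[of \<Gamma>1 "EBind x ([], Scalar B \<psi>)" \<Gamma>2] wf \<Gamma> by simp
  have "distinct (bound_names \<Gamma>1 @ x # bound_names \<Gamma>2)"
    using wf \<Gamma> by (simp add: wf_env_def bound_names_append)
  then have fresh: "\<forall>z\<in>set (bound_names (rev \<Gamma>2 @ [EBind x ([], Scalar B \<psi>)])). V z \<notin> fv \<psi>"
    using fv\<psi> by (auto simp: bound_names_append set_bound_names_rev)
  have rev\<Gamma>: "rev \<Gamma> = rev \<Gamma>2 @ EBind x ([], Scalar B \<psi>) # rev \<Gamma>1"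
    using \<Gamma> by simp
  have "bnd {V x} \<Gamma> = FAnd (subst_nu x \<psi>) (bnd_rev (fv \<psi>) (rev \<Gamma>1))"
    unfolding bnd_def rev\<Gamma>
    using x\<Gamma>2 by (subst bnd_rev_append_fresh) (auto simp: set_bound_names_rev)
  also have "bnd_rev (fv \<psi>) (rev \<Gamma>1) = bnd (fv \<psi>) \<Gamma>"
    unfolding bnd_def rev\<Gamma> using bnd_rev_append_fresh[OF fresh, of "rev \<Gamma>1"] by simp
  finally show ?thesis .
qed

lemma path_rev_drop_bind: "path_rev (R1 @ EBind y S # R2) = path_rev (R1 @ R2)"
  by (induct R1 rule: path_rev.induct) auto

lemma bnd_rev_drop_nonscalar:
  assumes "\<not> is_scalar T"
  shows "bnd_rev v (R1 @ EBind y (as, T) # R2) = bnd_rev v (R1 @ R2)"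
proof (induct R1 arbitrary: v)
  case Nil
  then show ?case using assms by (cases T) simp_all
next
  case (Cons e R)
  show ?case
  proof (cases e)
    case (EBind x S)
    obtain as' T' where S: "S = (as', T')" by (cases S)
    show ?thesis using Cons unfolding EBind S by (cases T') auto
  qed (use Cons in simp)
qed

lemma assumptions_drop_nonscalar:
  assumes "\<not> is_scalar T"
  shows "assumptions (\<Gamma>1 @ EBind y (as, T) # \<Gamma>2) \<phi> = assumptions (\<Gamma>1 @ \<Gamma>2) \<phi>"
proof -
  have "rev (\<Gamma>1 @ EBind y (as, T) # \<Gamma>2) = rev \<Gamma>2 @ EBind y (as, T) # rev \<Gamma>1"
    by simp
  then show ?thesis
    unfolding assumptions_def pi_env_def bnd_def
    by (simp add: path_rev_drop_bind bnd_rev_drop_nonscalar[OF assms])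
qed

lemma subtype_drop_nonscalar:
  assumes "\<not> is_scalar T"
  shows "subtype \<Gamma> S S' \<Longrightarrow> \<Gamma> = \<Gamma>1 @ EBind y (as, T) # \<Gamma>2 \<Longrightarrow> subtype (\<Gamma>1 @ \<Gamma>2) S S'"
    and "subbase \<Gamma> B B' \<Longrightarrow> \<Gamma> = \<Gamma>1 @ EBind y (as, T) # \<Gamma>2 \<Longrightarrow> subbase (\<Gamma>1 @ \<Gamma>2) B B'"
proof (induct arbitrary: \<Gamma>1 \<Gamma>2 and \<Gamma>1 \<Gamma>2 rule: subtype_subbase.inducts)
  case (sub_scalar \<Gamma> B B' \<psi> \<psi>')
  then show ?case
    by (auto intro!: subtype_subbase.sub_scalar simp: assumptions_drop_nonscalar[OF assms])
next
  case (sub_arr \<Gamma> Ty Tx y' x T T')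
  have "subtype (env_ext (\<Gamma>1 @ \<Gamma>2) [(y', Ty)]) (rename_ty y' x T) T'"
    using sub_arr(4)[of \<Gamma>1 "\<Gamma>2 @ ctx_env [(y', Ty)]"] sub_arr(5) by (simp add: env_ext_def)
  then show ?case using sub_arr by (auto intro: subtype_subbase.sub_arr)
next
  case (subb_data \<Gamma> Ts Ts' d)
  then have "list_all2 (subtype (\<Gamma>1 @ \<Gamma>2)) Ts Ts'"
    by (auto elim: list_all2_mono)
  then show ?case by (rule subtype_subbase.subb_data)
qed (auto intro: subtype_subbase.intros)

lemma rename_ty_fresh:
  "x \<notin> fv_ty T \<Longrightarrow> rename_ty y x T = T"
  "x \<notin> fv_base B \<Longrightarrow> rename_base y x B = B"
proof (induct T and B)
  case (Scalar B \<psi>)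
  have "rename_f y x \<psi> = \<psi>"
    unfolding rename_f_def by (rule fml.map_ident_strong) (use Scalar in auto)
  then show ?case using Scalar by simp
next
  case (BData d Ts)
  then show ?case by (auto intro: map_idI)
qed auto

lemma subtype_singleton:
  assumes wf: "wf_env \<Gamma>" and lk: "lookup \<Gamma> x = Some ([], Scalar B \<psi>)"
    and st: "subtype \<Gamma> (Scalar B \<psi>) T"
  shows "subtype \<Gamma> (Scalar B (FEq (FVar Nu) (FVar (V x)))) T"
  using st
proof (cases rule: subtype.cases)
  case (sub_scalar B' \<psi>')
  let ?eq = "FEq (FVar Nu) (FVar (V x))" and ?p = "fv (pi_env \<Gamma>)"
  have "truth (feval I \<sigma> \<psi>')"
    if asm: "truth (feval I \<sigma> (assumptions \<Gamma> (FImp ?eq \<psi>')))" and eq: "\<sigma> Nu = \<sigma> (V x)"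
    for I \<sigma>
  proof -
    have "?p \<union> fv (FImp ?eq \<psi>') = (?p \<union> fv \<psi>') \<union> ({Nu} \<union> {V x})"
      by auto
    then have \<pi>: "truth (feval I \<sigma> (pi_env \<Gamma>))"
      and bnd\<psi>': "truth (feval I \<sigma> (bnd (?p \<union> fv \<psi>') \<Gamma>))"
      and bndx: "truth (feval I \<sigma> (bnd {V x} \<Gamma>))"
      using asm unfolding assumptions_def bnd_def by (simp_all only: feval.simps truth_VBool truth_bnd_rev_Un)
    have \<psi>: "truth (feval I \<sigma> \<psi>)" and bnd\<psi>: "truth (feval I \<sigma> (bnd (fv \<psi>) \<Gamma>))"
      using bndx eq unfolding bnd_lookup_scalar[OF wf lk]
      by (auto simp: truth_feval_subst_nu fun_upd_idem)
    have "?p \<union> fv (FImp \<psi> \<psi>') = (?p \<union> fv \<psi>') \<union> fv \<psi>"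
      by auto
    then have "truth (feval I \<sigma> (assumptions \<Gamma> (FImp \<psi> \<psi>')))"
      using \<pi> bnd\<psi>' bnd\<psi> unfolding assumptions_def bnd_def by (simp add: truth_bnd_rev_Un)
    then show ?thesis
      using sub_scalar(3) \<psi> unfolding valid_def by (metis feval.simps(5,7) truth_VBool)
  qed
  then have "valid (FImp (FAnd (assumptions \<Gamma> (FImp ?eq \<psi>')) ?eq) \<psi>')"
    unfolding valid_def by auto
  then show ?thesis
    using sub_scalar by (auto intro: subtype_subbase.sub_scalar)
qed (auto intro: subtype_subbase.sub_top)

theorem lemma1:
  fixes chk :: "env \<Rightarrow> tm \<Rightarrow> ty \<Rightarrow> bool"
    and Q :: "qualifier set" and \<Gamma> :: env and t :: tm and T T' :: ty and C :: ctx
  assumes "wf_env \<Gamma>"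
    and "is_eterm t"
    and "rtrip chk Q \<Gamma> t T C T'"
  shows "subtype (env_ext \<Gamma> C) T' T"
  using assms(3,1)
proof (induct rule: rtrip.induct)
  case (VarSc \<Gamma> x B \<psi> T)
  then show ?case using subtype_singleton by (simp add: env_ext_def ctx_env_def)
next
  case (VarAll \<Gamma> x as T' Ts T)
  then show ?case by (simp add: env_ext_def ctx_env_def)
next
  case (AppFO y T \<Gamma> e1 B C1 x \<psi> T' e2 C2 Tx)
  then show ?case by simp
next
  case (AppHO y T x T' f \<Gamma> e C Tx)
  have "subtype (env_ext \<Gamma> C) (Arr x Tx T') (Arr y Bot T)"
    using AppHO by simp
  then have "subtype (env_ext \<Gamma> C @ [EBind y ([], Bot)]) (rename_ty y x T') T"
    by (cases rule: subtype.cases) (auto simp: env_ext_def ctx_env_def)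
  then have "subtype (env_ext \<Gamma> C) (rename_ty y x T') T"
    using subtype_drop_nonscalar(1)[of Bot] by fastforce
  then show ?case
    using rename_ty_fresh(1)[OF AppHO(2)] by simp
qed

end
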